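(* Let $n \ge 1$ and $d \ge 1$ be integers and let $\Phi$ be a real $N \times d$ matrix satisfying the Restricted Isometry Condition with parameters $(2n, \varepsilon)$ for $\varepsilon = 0.03/\sqrt{\log n}$. Let $v \in \mathbb{R}^d$ be $n$-sparse, and let $x = \Phi v$. Then ROMP, run on input $x$ and sparsity level $n$, terminates in at most $n$ iterations and outputs a set $I \subset \{1,\dots,d\}$ such that $\mathrm{supp}(v) \subset I$ and $|I| \le 2n$.
   Context: A vector $v \in \mathbb{R}^d$ is $n$-sparse if $|\mathrm{supp}(v)| \le n$, where $\mathrm{supp}(v) = \{i : v_i \neq 0\}$. A matrix $\Phi$ satisfies the Restricted Isometry Condition (RIC) with parameters $(m,\varepsilon)$, $\varepsilon \in (0,1)$, if $(1-\varepsilon)\|w\|_2 \le \|\Phi w\|_2 \le (1+\varepsilon)\|w\|_2$ for all $m$-sparse $w \in \mathbb{R}^d$. For $I \subset \{1,\dots,d\}$, $\Phi_I$ denotes the submatrix of $\Phi$ formed by the columns indexed by $I$, and for a vector $y$, $y|_T$ denotes its restriction to the coordinates in $T$. The algorithm ROMP (Regularized Orthogonal Matching Pursuit), with input a measurement vector $x \in \mathbb{R}^N$ and sparsity level $n$, is: Initialize $I = \emptyset$ and residual $r = x$. Repeat the following until $r = 0$: (Identify) let $u = \Phi^* r$ and choose a set $J$ of the $n$ biggest coordinates of $u$ in magnitude, or all nonzero coordinates of $u$, whichever set is smaller; (Regularize) among all subsets $J_0 \subset J$ with comparable coordinates, i.e. $|u(i)| \le 2|u(j)|$ for all $i,j \in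 J_0$, choose one with maximal energy $\|u|_{J_0}\|_2$; (Update) set $I \leftarrow I \cup J_0$, $y = \operatorname{argmin}_{z \in \mathbb{R}^I} \|x - \Phi z\|_2$ (i.e. $z$ supported on $I$), and $r = x - \Phi y$. The output is the final set $I$. *)

theory Defs
  imports "HOL-Analysis.Analysis"
begin

definition supp :: "real^'d \<Rightarrow> 'd set" where
  "supp v = {i. v $ i \<noteq> 0}"

definition sparse :: "nat \<Rightarrow> real^'d \<Rightarrow> bool" where
  "sparse n v \<longleftrightarrow> card (supp v) \<le> n"

definition RIC :: "real^'d^'N \<Rightarrow> nat \<Rightarrow> real \<Rightarrow> bool" where
  "RIC Phi m eps \<longleftrightarrow> 0 < eps \<and> eps < 1 \<and>
     (\<forall>w :: real^'d. sparse m w \<longrightarrow>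
        (1 - eps) * norm w \<le> norm (Phi *v w) \<and> norm (Phi *v w) \<le> (1 + eps) * norm w)"

definition restrict_vec :: "real^'d \<Rightarrow> 'd set \<Rightarrow> real^'d" where
  "restrict_vec u T = (\<chi> i. if i \<in> T then u $ i else 0)"

definition romp_identify :: "nat \<Rightarrow> real^'d \<Rightarrow> 'd set \<Rightarrow> bool" where
  "romp_identify n u J \<longleftrightarrow>
     (if card (supp u) \<le> n then J = supp u
      else card J = n \<and> (\<forall>i\<in>J. \<forall>j. j \<notin> J \<longrightarrow> \<bar>u $ j\<bar> \<le> \<bar>u $ i\<bar>))"

definition comparable :: "real^'d \<Rightarrow> 'd set \<Rightarrow> bool" where
  "comparable u J0 \<longleftrightarrow> (\<forall>i\<in>J0. \<forall>j\<in>J0. \<bar>u $ i\<bar> \<le> 2 * \<bar>u $ j\<bar>)"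

definition romp_regularize :: "real^'d \<Rightarrow> 'd set \<Rightarrow> 'd set \<Rightarrow> bool" where
  "romp_regularize u J J0 \<longleftrightarrow> J0 \<subseteq> J \<and> comparable u J0 \<and>
     (\<forall>K. K \<subseteq> J \<longrightarrow> comparable u K \<longrightarrow>
        norm (restrict_vec u K) \<le> norm (restrict_vec u J0))"

definition ls_argmin :: "real^'d^'N \<Rightarrow> real^'N \<Rightarrow> 'd set \<Rightarrow> real^'d \<Rightarrow> bool" where
  "ls_argmin Phi x I y \<longleftrightarrow> supp y \<subseteq> I \<and>
     (\<forall>z. supp z \<subseteq> I \<longrightarrow> norm (x - Phi *v y) \<le> norm (x - Phi *v z))"

text \<open>One iteration of ROMP on input x with sparsity level n, from state (I, r) to (I', r').
  Performed only while r \<noteq> 0.  All admissible choices (ties) are allowed.\<close>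
definition romp_step :: "real^'d^'N \<Rightarrow> real^'N \<Rightarrow> nat \<Rightarrow>
    ('d set \<times> (real^'N)) \<Rightarrow> ('d set \<times> (real^'N)) \<Rightarrow> bool" where
  "romp_step Phi x n s s' \<longleftrightarrow> snd s \<noteq> 0 \<and>
     (\<exists>J J0 y. let u = transpose Phi *v snd s in
        romp_identify n u J \<and> romp_regularize u J J0 \<and>
        ls_argmin Phi x (fst s \<union> J0) y \<and>
        s' = (fst s \<union> J0, x - Phi *v y))"

end

theory Submission
  imports Defs "HOL-Analysis.Harmonic_Numbers"
begin

text \<open>
  Let \<open>y\<close> be the current least-squares solution on \<open>I\<close>, \<open>r = \<Phi>(v - y)\<close> the residual and
  \<open>u = \<Phi>\<^sup>T r\<close>. The normal equations make \<open>u\<close> vanish on \<open>I\<close>, and the RIC makes \<open>u\<close> close to the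
  part \<open>v\<^sub>0\<close> of \<open>v\<close> outside \<open>I\<close>: on every set of at most \<open>n\<close> coordinates the error has norm at
  most \<open>c \<parallel>v\<^sub>0\<parallel>\<close> with \<open>c = 2(2\<epsilon> + \<epsilon>\<^sup>2)/(1 - \<epsilon>)\<close>. So the \<open>n\<close> largest coordinates of \<open>u\<close> carry
  energy at least \<open>(1 - c)\<^sup>2 \<parallel>v\<^sub>0\<parallel>\<^sup>2\<close>, and by a dyadic pigeonhole argument the regularized set \<open>J\<^sub>0\<close>
  keeps a fraction \<open>1/(4 ln n)\<close> of it, while the coordinates of \<open>J\<^sub>0\<close> outside \<open>supp v\<close> carry at
  most \<open>c\<^sup>2 \<parallel>v\<^sub>0\<parallel>\<^sup>2\<close>. Since the coordinates of \<open>J\<^sub>0\<close> are comparable, a majority of them outside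
  \<open>supp v\<close> would carry more than an eighth of the energy of \<open>J\<^sub>0\<close>; for \<open>\<epsilon> = 0.03/\<surd>ln n\<close> this is
  impossible. Hence every iteration adds a nonempty set, disjoint from \<open>I\<close>, at least half of which
  lies in \<open>supp v\<close>. This bounds the number of iterations by \<open>n\<close> and \<open>|I|\<close> by \<open>2n\<close>, and when the
  residual vanishes the RIC on \<open>I \<union> supp v\<close> forces \<open>y = v\<close>.
\<close>

definition energy :: "real^'d \<Rightarrow> 'd set \<Rightarrow> real" where
  "energy u K = (\<Sum>i\<in>K. (u $ i)\<^sup>2)"

lemma energy_nonneg: "0 \<le> energy u K"
  unfolding energy_def by (simp add: sum_nonneg)

lemma energy_mono: "A \<subseteq> B \<Longrightarrow> energy u A \<le> energy u B"
  unfolding energy_def by (rule sum_mono2) auto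

lemma energy_le_energy_supp: "energy u K \<le> energy u (supp u)"
proof -
  have "energy u K = energy u (K \<inter> supp u)"
    unfolding energy_def supp_def by (rule sum.mono_neutral_right) auto
  also have "\<dots> \<le> energy u (supp u)" by (rule energy_mono) auto
  finally show ?thesis .
qed

lemma norm_restrict_vec_sq: "(norm (restrict_vec u K))\<^sup>2 = energy u K"
proof -
  have "(norm (restrict_vec u K))\<^sup>2 = (\<Sum>i\<in>UNIV. if i \<in> K then (u $ i)\<^sup>2 else 0)"
    unfolding power2_norm_eq_inner inner_vec_def restrict_vec_def
    by (intro sum.cong) (auto simp: power2_eq_square)
  then show ?thesis by (simp add: sum.If_cases energy_def)
qed

lemma norm_restrict_vec_le_iff:
  "norm (restrict_vec u A) \<le> norm (restrict_vec u B) \<longleftrightarrow> energy u A \<le> energy u B"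
  by (simp flip: norm_restrict_vec_sq add: power_mono_iff)

lemma inner_restrict_vec: "restrict_vec w A \<bullet> w = energy w A"
proof -
  have "restrict_vec w A \<bullet> w = (\<Sum>i\<in>UNIV. if i \<in> A then (w $ i)\<^sup>2 else 0)"
    unfolding inner_vec_def restrict_vec_def by (intro sum.cong) (auto simp: power2_eq_square)
  then show ?thesis by (simp add: sum.If_cases energy_def)
qed

lemma restrict_vec_diff: "restrict_vec (u - w) A = restrict_vec u A - restrict_vec w A"
  unfolding restrict_vec_def by (auto simp: vec_eq_iff)

lemma restrict_vec_idem: "supp w \<subseteq> A \<Longrightarrow> restrict_vec w A = w"
  unfolding restrict_vec_def supp_def by (auto simp: vec_eq_iff)

lemma restrict_vec_eq_0: "supp w \<inter> A = {} \<Longrightarrow> restrict_vec w A = 0"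
  unfolding restrict_vec_def supp_def by (auto simp: vec_eq_iff)

lemma supp_restrict_vec: "supp (restrict_vec u K) \<subseteq> K"
  unfolding supp_def restrict_vec_def by auto

lemma supp_add: "supp (a + b) \<subseteq> supp a \<union> supp b"
  unfolding supp_def by auto

lemma supp_diff: "supp (a - b) \<subseteq> supp a \<union> supp b"
  unfolding supp_def by auto

lemma supp_scaleR: "supp (c *\<^sub>R a) \<subseteq> supp a"
  unfolding supp_def by auto

lemma inner_eq_0_if_disjoint_supp: "supp a \<inter> supp b = {} \<Longrightarrow> a \<bullet> (b :: real^'d) = 0"
  unfolding inner_vec_def supp_def by (intro sum.neutral) auto

lemma inner_transpose_mult: "(z :: real^'d) \<bullet> (transpose Phi *v r) = (Phi *v z) \<bullet> r"
  by (metis dot_lmul_matrix inner_commute transpose_matrix_vector)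

lemma RIC_lower:
  "RIC Phi m e \<Longrightarrow> supp w \<subseteq> S \<Longrightarrow> card S \<le> m \<Longrightarrow> (1 - e) * norm w \<le> norm (Phi *v w)"
  unfolding RIC_def sparse_def by (meson card_mono finite dual_order.trans)

lemma RIC_upper:
  "RIC Phi m e \<Longrightarrow> supp w \<subseteq> S \<Longrightarrow> card S \<le> m \<Longrightarrow> norm (Phi *v w) \<le> (1 + e) * norm w"
  unfolding RIC_def sparse_def by (meson card_mono finite dual_order.trans)

lemma RIC_norm_sq_bounds:
  assumes "RIC Phi m e" "supp w \<subseteq> S" "card S \<le> m"
  shows "(1 - e)\<^sup>2 * (norm w)\<^sup>2 \<le> (norm (Phi *v w))\<^sup>2"
    and "(norm (Phi *v w))\<^sup>2 \<le> (1 + e)\<^sup>2 * (norm w)\<^sup>2"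
proof -
  have "0 < e" "e < 1" using assms(1) unfolding RIC_def by auto
  then show "(1 - e)\<^sup>2 * (norm w)\<^sup>2 \<le> (norm (Phi *v w))\<^sup>2"
    using power_mono[OF RIC_lower[OF assms], of 2] by (simp add: power_mult_distrib)
  show "(norm (Phi *v w))\<^sup>2 \<le> (1 + e)\<^sup>2 * (norm w)\<^sup>2"
    using power_mono[OF RIC_upper[OF assms], of 2] by (simp add: power_mult_distrib)
qed

text \<open>Polarization: \<open>4 \<langle>\<Phi>a, \<Phi>b\<rangle> = \<parallel>\<Phi>(a+b)\<parallel>\<^sup>2 - \<parallel>\<Phi>(a-b)\<parallel>\<^sup>2\<close>, and both squares are
  controlled by the RIC on the common support.\<close>
lemma RIC_inner_error_sum_sq:
  assumes R: "RIC Phi m e" and a: "supp a \<subseteq> S" and b: "supp b \<subseteq> S" and S: "card S \<le> m"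
  shows "\<bar>(Phi *v a) \<bullet> (Phi *v b) - a \<bullet> b\<bar> \<le> (2*e + e\<^sup>2) * ((norm a)\<^sup>2 + (norm b)\<^sup>2) / 2"
proof -
  have sp: "supp (a + b) \<subseteq> S" "supp (a - b) \<subseteq> S" using a b supp_add supp_diff by blast+
  note plus = RIC_norm_sq_bounds[OF R sp(1) S] and minus = RIC_norm_sq_bounds[OF R sp(2) S]
  define P where "P = (norm a)\<^sup>2 + (norm b)\<^sup>2"
  define q where "q = a \<bullet> b"
  have pol: "(norm (Phi *v (a + b)))\<^sup>2 - (norm (Phi *v (a - b)))\<^sup>2 = 4 * ((Phi *v a) \<bullet> (Phi *v b))"
    unfolding matrix_vector_right_distrib matrix_vector_mult_diff_distrib power2_norm_eq_inner
    by (simp add: inner_add_left inner_add_right inner_diff_left inner_diff_right inner_commute)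
  have plus_sq: "(norm (a + b))\<^sup>2 = P + 2*q" and minus_sq: "(norm (a - b))\<^sup>2 = P - 2*q"
    unfolding P_def q_def power2_norm_eq_inner
    by (simp_all add: inner_add_left inner_add_right inner_diff_left inner_diff_right inner_commute)
  have "\<bar>q\<bar> \<le> norm a * norm b" unfolding q_def by (rule Cauchy_Schwarz_ineq2)
  also have "\<dots> \<le> P / 2" unfolding P_def using sum_squares_bound[of "norm a" "norm b"]
    by (simp add: power2_eq_square)
  finally have "\<bar>e\<^sup>2 * q\<bar> \<le> e\<^sup>2 * (P / 2)"
    by (simp add: abs_mult mult_left_mono del: times_divide_eq_right)
  moreover have "4 * ((Phi *v a) \<bullet> (Phi *v b)) \<le> (1 + e)\<^sup>2 * (P + 2*q) - (1 - e)\<^sup>2 * (P - 2*q)"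
    and "(1 - e)\<^sup>2 * (P + 2*q) - (1 + e)\<^sup>2 * (P - 2*q) \<le> 4 * ((Phi *v a) \<bullet> (Phi *v b))"
    using pol plus minus unfolding plus_sq minus_sq by linarith+
  moreover have "(1 + e)\<^sup>2 * (P + 2*q) - (1 - e)\<^sup>2 * (P - 2*q) = 4 * (e*P + q + e\<^sup>2 * q)"
    and "(1 - e)\<^sup>2 * (P + 2*q) - (1 + e)\<^sup>2 * (P - 2*q) = 4 * (q - e*P + e\<^sup>2 * q)"
    by (simp_all add: power2_eq_square algebra_simps)
  ultimately show ?thesis unfolding P_def[symmetric] q_def[symmetric] by (simp add: abs_le_iff) argo
qed

lemma RIC_inner_error:
  assumes R: "RIC Phi m e" and a: "supp a \<subseteq> S" and b: "supp b \<subseteq> S" and S: "card S \<le> m"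
  shows "\<bar>(Phi *v a) \<bullet> (Phi *v b) - a \<bullet> b\<bar> \<le> (2*e + e\<^sup>2) * norm a * norm b"
proof (cases "a = 0 \<or> b = 0")
  case True
  then show ?thesis by auto
next
  case False
  then have na: "norm a > 0" and nb: "norm b > 0" by auto
  \<comment> \<open>Rescale \<open>a\<close> by \<open>t\<close> and \<open>b\<close> by \<open>1/t\<close> so that both have squared norm \<open>\<parallel>a\<parallel> \<parallel>b\<parallel>\<close>.\<close>
  define t where "t = sqrt (norm b / norm a)"
  have t: "t > 0" "t\<^sup>2 = norm b / norm a" unfolding t_def using na nb by simp_all
  have "supp (t *\<^sub>R a) \<subseteq> S" "supp ((1/t) *\<^sub>R b) \<subseteq> S" using a b supp_scaleR by blast+
  note scaled = RIC_inner_error_sum_sq[OF R this S]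
  have "(norm (t *\<^sub>R a))\<^sup>2 = norm a * norm b" "(norm ((1/t) *\<^sub>R b))\<^sup>2 = norm a * norm b"
    using t na by (simp_all add: power_mult_distrib power_divide power2_eq_square field_simps)
  with scaled t(1) show ?thesis by (simp add: matrix_vector_mult_scaleR)
qed

section \<open>Regularization by dyadic bands\<close>

definition dyadic_band :: "real^'d \<Rightarrow> real \<Rightarrow> 'd set \<Rightarrow> nat \<Rightarrow> 'd set" where
  "dyadic_band u M J k = {j \<in> J. M / 2 ^ Suc k < \<bar>u $ j\<bar> \<and> \<bar>u $ j\<bar> \<le> M / 2 ^ k}"

lemma comparable_dyadic_band: "comparable u (dyadic_band u M J k)"
  unfolding comparable_def dyadic_band_def by auto

lemma dyadic_bands_disjoint:
  assumes "0 < M" "i \<noteq> k"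
  shows "dyadic_band u M J i \<inter> dyadic_band u M J k = {}"
proof -
  have "dyadic_band u M J i \<inter> dyadic_band u M J k = {}" if "i < k" for i k
  proof -
    have "(2::real) ^ Suc i \<le> 2 ^ k" using that by (intro power_increasing) auto
    then have "M / 2 ^ k \<le> M / 2 ^ Suc i" using assms(1) by (intro divide_left_mono) auto
    then show ?thesis unfolding dyadic_band_def by auto
  qed
  with assms(2) show ?thesis by (metis inf_commute linorder_neqE_nat)
qed

lemma dyadic_bands_cover:
  assumes "\<forall>j\<in>J. \<bar>u $ j\<bar> \<le> M"
  shows "{j \<in> J. M / 2 ^ L < \<bar>u $ j\<bar>} \<subseteq> (\<Union>k<L. dyadic_band u M J k)"
proof (induction L)
  case 0
  then show ?case using assms by auto
next
  case (Suc L)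
  show ?case
  proof
    fix j assume j: "j \<in> {j \<in> J. M / 2 ^ Suc L < \<bar>u $ j\<bar>}"
    show "j \<in> (\<Union>k<Suc L. dyadic_band u M J k)"
    proof (cases "M / 2 ^ L < \<bar>u $ j\<bar>")
      case True
      then show ?thesis using Suc.IH j by fastforce
    next
      case False
      then have "j \<in> dyadic_band u M J L" using j unfolding dyadic_band_def by auto
      then show ?thesis by auto
    qed
  qed
qed

lemma energy_le_dyadic_bands:
  assumes "\<forall>j\<in>J. \<bar>u $ j\<bar> \<le> M" "0 < M"
  shows "energy u J \<le> (\<Sum>k<L. energy u (dyadic_band u M J k)) + card J * (M / 2 ^ L)\<^sup>2"
proof -
  define H where "H = {j \<in> J. M / 2 ^ L < \<bar>u $ j\<bar>}"
  define R where "R = {j \<in> J. \<bar>u $ j\<bar> \<le> M / 2 ^ L}"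
  have "energy u J = energy u H + energy u R"
  proof -
    have "J = H \<union> R" "H \<inter> R = {}" unfolding H_def R_def by auto
    then show ?thesis unfolding energy_def by (simp add: sum.union_disjoint)
  qed
  moreover have "energy u H \<le> (\<Sum>k<L. energy u (dyadic_band u M J k))"
  proof -
    have "energy u H \<le> energy u (\<Union>k<L. dyadic_band u M J k)"
      using dyadic_bands_cover[OF assms(1)] unfolding H_def by (rule energy_mono)
    also have "\<dots> = (\<Sum>k<L. energy u (dyadic_band u M J k))"
      unfolding energy_def using dyadic_bands_disjoint[OF assms(2)]
      by (intro sum.UNION_disjoint) (simp_all, blast)
    finally show ?thesis .
  qed
  moreover have "energy u R \<le> card J * (M / 2 ^ L)\<^sup>2"
  proof -
    have "energy u R \<le> card R * (M / 2 ^ L)\<^sup>2"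
      unfolding energy_def R_def
      by (rule sum_bounded_above) (metis (mono_tags) abs_ge_zero mem_Collect_eq power2_abs power_mono)
    also have "\<dots> \<le> card J * (M / 2 ^ L)\<^sup>2"
      unfolding R_def by (intro mult_right_mono) (auto intro: card_mono)
    finally show ?thesis .
  qed
  ultimately show ?thesis by linarith
qed

lemma exists_comparable_energy_fraction:
  assumes "card J \<le> 4 ^ L"
  shows "\<exists>K \<subseteq> J. comparable u K \<and> energy u J \<le> (real L + 1) * energy u K"
proof (cases "\<forall>j\<in>J. u $ j = 0")
  case True
  then have "energy u J = 0" unfolding energy_def by simp
  then show ?thesis by (intro exI[of _ "{}"]) (auto simp: comparable_def energy_def)
next
  case False
  then have "J \<noteq> {}" by auto
  define M where "M = Max ((\<lambda>j. \<bar>u $ j\<bar>) ` J)"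
  have le_M: "\<forall>j\<in>J. \<bar>u $ j\<bar> \<le> M" unfolding M_def by simp
  have "M \<in> (\<lambda>j. \<bar>u $ j\<bar>) ` J" unfolding M_def using \<open>J \<noteq> {}\<close> by (intro Max_in) auto
  then obtain jm where jm: "jm \<in> J" "\<bar>u $ jm\<bar> = M" by auto
  have "0 < M" using False le_M by force
  define C where "C = insert {jm} (dyadic_band u M J ` {..<L})"
  have "Max (energy u ` C) \<in> energy u ` C" unfolding C_def by (intro Max_in) auto
  then obtain K where K: "K \<in> C" "energy u K = Max (energy u ` C)" by auto
  have le_K: "energy u K' \<le> energy u K" if "K' \<in> C" for K'
    using that unfolding K(2) by (intro Max_ge) (auto simp: C_def)
  have "(2::real) ^ L * 2 ^ L = 4 ^ L" by (simp flip: power_mult_distrib)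
  then have "card J * (M / 2 ^ L)\<^sup>2 = card J / 4 ^ L * M\<^sup>2"
    by (simp add: power_divide power2_eq_square)
  also have "\<dots> \<le> M\<^sup>2"
  proof -
    have "real (card J) \<le> 4 ^ L" using assms by (metis of_nat_le_iff of_nat_numeral of_nat_power)
    then show ?thesis by (intro mult_left_le_one_le) auto
  qed
  also have "\<dots> = energy u {jm}" using jm(2) power2_abs[of "u $ jm"] unfolding energy_def by simp
  also have "\<dots> \<le> energy u K" by (rule le_K) (simp add: C_def)
  finally have "card J * (M / 2 ^ L)\<^sup>2 \<le> energy u K" .
  moreover have "(\<Sum>k<L. energy u (dyadic_band u M J k)) \<le> L * energy u K"
    using sum_bounded_above[of "{..<L}" "\<lambda>k. energy u (dyadic_band u M J k)" "energy u K"]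
    by (simp add: le_K C_def)
  ultimately have "energy u J \<le> (real L + 1) * energy u K"
    using energy_le_dyadic_bands[OF le_M \<open>0 < M\<close>, of L] by (simp add: algebra_simps)
  moreover have "K \<subseteq> J" "comparable u K"
    using K(1) jm(1) comparable_dyadic_band unfolding C_def dyadic_band_def by (auto simp: comparable_def)
  ultimately show ?thesis by blast
qed

lemma regularization_energy_fraction:
  assumes "card J \<le> n" "2 \<le> n"
  shows "\<exists>K \<subseteq> J. comparable u K \<and> energy u J \<le> 4 * ln (real n) * energy u K"
proof -
  obtain L where L: "2 ^ L \<le> n" "n < 2 ^ (L + 1)" using ex_power_ivl1[of 2 n] assms(2) by auto
  then have "1 \<le> L" using assms(2) by (cases L) auto
  have "n \<le> 4 ^ L"
    using L(2) power_increasing[of "L + 1" "2 * L" "2::nat"] \<open>1 \<le> L\<close> by (simp add: power_mult)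
  then obtain K where K: "K \<subseteq> J" "comparable u K" "energy u J \<le> (real L + 1) * energy u K"
    using exists_comparable_energy_fraction[of J L u] assms(1) by auto
  have "(2::real) ^ L \<le> real n" using L(1) by (metis of_nat_le_iff of_nat_numeral of_nat_power)
  then have "ln (2 ^ L) \<le> ln (real n)" using assms(2) by (subst ln_le_cancel_iff) auto
  then have "real L * ln 2 \<le> ln (real n)" by (simp add: ln_realpow)
  moreover have "real L * (2/3) \<le> real L * ln 2" using ln2_ge_two_thirds by (intro mult_left_mono) auto
  ultimately have "real L + 1 \<le> 4 * ln (real n)" using \<open>1 \<le> L\<close> by linarith
  then have "(real L + 1) * energy u K \<le> 4 * ln (real n) * energy u K"
    by (intro mult_right_mono energy_nonneg)
  with K show ?thesis by auto
qed

lemma romp_identify_card_le: "romp_identify n u J \<Longrightarrow> card J \<le> n"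
  unfolding romp_identify_def by (auto split: if_splits)

lemma romp_identify_subset_supp:
  assumes "romp_identify n u J"
  shows "J \<subseteq> supp u"
proof (cases "card (supp u) \<le> n")
  case True
  then show ?thesis using assms unfolding romp_identify_def by simp
next
  case False
  then have J: "card J = n" "\<forall>i\<in>J. \<forall>j. j \<notin> J \<longrightarrow> \<bar>u $ j\<bar> \<le> \<bar>u $ i\<bar>"
    using assms unfolding romp_identify_def by auto
  show ?thesis
  proof
    fix i assume "i \<in> J"
    show "i \<in> supp u"
    proof (rule ccontr)
      assume "i \<notin> supp u"
      then have "supp u \<subseteq> J" using J(2) \<open>i \<in> J\<close> unfolding supp_def by force
      then show False using False J(1) card_mono[of J "supp u"] by simp
    qed
  qed
qed

lemma romp_identify_nonempty:
  assumes "romp_identify n u J" "u \<noteq> 0" "1 \<le> n"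
  shows "J \<noteq> {}"
proof -
  have "supp u \<noteq> {}" using assms(2) unfolding supp_def by (auto simp: vec_eq_iff)
  then show ?thesis using assms(1,3) unfolding romp_identify_def by (auto split: if_splits)
qed

lemma sum_le_sum_if_card_le_dominated:
  fixes f :: "'a \<Rightarrow> real"
  assumes "finite X" "card X \<le> card Y"
    and "\<And>a b. a \<in> X \<Longrightarrow> b \<in> Y \<Longrightarrow> f a \<le> f b" and "\<And>a. 0 \<le> f a"
  shows "sum f X \<le> sum f Y"
proof (cases "X = {}")
  case True
  then show ?thesis using assms(4) by (simp add: sum_nonneg)
next
  case False
  define m where "m = Max (f ` X)"
  have "m \<in> f ` X" unfolding m_def using False assms(1) by (intro Max_in) auto
  then obtain a where a: "a \<in> X" "f a = m" by auto
  have "sum f X \<le> card X * m" by (rule sum_bounded_above) (simp add: m_def assms(1))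
  also have "\<dots> \<le> card Y * m" using assms(2,4) a(2) by (intro mult_right_mono) auto
  also have "\<dots> \<le> sum f Y" using assms(3) a by (intro sum_bounded_below) auto
  finally show ?thesis .
qed

lemma energy_le_romp_identify:
  assumes J: "romp_identify n u J" and S: "card S \<le> n"
  shows "energy u S \<le> energy u J"
proof (cases "card (supp u) \<le> n")
  case True
  then show ?thesis using J energy_le_energy_supp unfolding romp_identify_def by simp
next
  case False
  then have J: "card J = n" "\<forall>i\<in>J. \<forall>j. j \<notin> J \<longrightarrow> \<bar>u $ j\<bar> \<le> \<bar>u $ i\<bar>"
    using J unfolding romp_identify_def by auto
  have "card (S - J) \<le> card (J - S)"
    using S J(1) card_Int_Diff[of S J] card_Int_Diff[of J S] by (simp add: Int_commute)
  then have "energy u (S - J) \<le> energy u (J - S)" unfolding energy_def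
    by (rule sum_le_sum_if_card_le_dominated[OF finite])
      (use J(2) in \<open>auto simp: abs_le_square_iff\<close>)
  then show ?thesis
    unfolding energy_def by (metis Int_commute add_left_mono finite sum.Int_Diff)
qed

lemma romp_identify_exists: "\<exists>J. romp_identify n (u :: real^'d) J"
proof (cases "card (supp u) \<le> n")
  case True
  then show ?thesis unfolding romp_identify_def by auto
next
  case False
  define F where "F = {J :: 'd set. card J = n}"
  define g where "g J = (\<Sum>i\<in>J. \<bar>u $ i\<bar>)" for J
  have "n \<le> card (UNIV :: 'd set)" using False card_mono[of UNIV "supp u"] by auto
  then obtain J1 :: "'d set" where "card J1 = n" using obtain_subset_with_card_n by metis
  then have "F \<noteq> {}" unfolding F_def by auto
  then have "Max (g ` F) \<in> g ` F" by (intro Max_in) auto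
  then obtain J where J: "J \<in> F" "g J = Max (g ` F)" by auto
  have "\<bar>u $ j\<bar> \<le> \<bar>u $ i\<bar>" if "i \<in> J" "j \<notin> J" for i j
  proof -
    define K where "K = insert j (J - {i})"
    have "card J = n" "0 < n" using J(1) that unfolding F_def by (auto simp: card_gt_0_iff)
    then have "K \<in> F" using that unfolding K_def F_def by (simp add: card_Diff_singleton)
    then have "g K \<le> g J" unfolding J(2) by (intro Max_ge) auto
    moreover have "g K = \<bar>u $ j\<bar> + g (J - {i})" "g J = \<bar>u $ i\<bar> + g (J - {i})"
      unfolding K_def g_def using that by (simp_all add: sum.remove)
    ultimately show ?thesis by linarith
  qed
  then show ?thesis using J(1) False unfolding romp_identify_def F_def by auto
qed

lemma romp_regularize_exists: "\<exists>J0. romp_regularize (u :: real^'d) J J0"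
proof -
  define C where "C = {K. K \<subseteq> J \<and> comparable u K}"
  define g where "g K = norm (restrict_vec u K)" for K
  have "{} \<in> C" unfolding C_def comparable_def by auto
  then have "Max (g ` C) \<in> g ` C" by (intro Max_in) auto
  then obtain J0 where J0: "J0 \<in> C" "g J0 = Max (g ` C)" by auto
  have "g K \<le> g J0" if "K \<in> C" for K unfolding J0(2) using that by (intro Max_ge) auto
  then show ?thesis using J0(1) unfolding romp_regularize_def C_def g_def by blast
qed

lemma energy_le_romp_regularize:
  "romp_regularize u J J0 \<Longrightarrow> K \<subseteq> J \<Longrightarrow> comparable u K \<Longrightarrow> energy u K \<le> energy u J0"
  unfolding romp_regularize_def by (simp flip: norm_restrict_vec_le_iff)

lemma romp_regularize_nonempty:
  assumes J0: "romp_regularize u J J0" and "J \<subseteq> supp u" "J \<noteq> {}"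
  shows "J0 \<noteq> {}"
proof
  assume "J0 = {}"
  obtain j where "j \<in> J" using assms(3) by auto
  then have "energy u {j} \<le> energy u J0"
    using energy_le_romp_regularize[OF J0, of "{j}"] by (simp add: comparable_def)
  with \<open>J0 = {}\<close> \<open>j \<in> J\<close> assms(2) show False by (auto simp: energy_def supp_def)
qed

text \<open>By comparability every coordinate of \<open>K\<close> carries at least a quarter of the largest one.\<close>
lemma energy_lt_majority_of_comparable:
  assumes comp: "comparable u K" and "K \<subseteq> supp u" "A \<subseteq> K" and card: "card K < 2 * card A"
  shows "energy u K < 8 * energy u A"
proof -
  have "K \<noteq> {}" using card \<open>A \<subseteq> K\<close> by auto
  define M where "M = Max ((\<lambda>i. (u $ i)\<^sup>2) ` K)"
  have "M \<in> (\<lambda>i. (u $ i)\<^sup>2) ` K" unfolding M_def using \<open>K \<noteq> {}\<close> by (intro Max_in) auto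
  then obtain j where j: "j \<in> K" "(u $ j)\<^sup>2 = M" by auto
  have "0 < M" using j assms(2) unfolding supp_def by auto
  have "M / 4 \<le> (u $ i)\<^sup>2" if "i \<in> K" for i
  proof -
    have "\<bar>u $ j\<bar> \<le> 2 * \<bar>u $ i\<bar>" using comp j(1) that unfolding comparable_def by auto
    then have "\<bar>u $ j\<bar>\<^sup>2 \<le> (2 * \<bar>u $ i\<bar>)\<^sup>2" by (rule power_mono) simp
    then show ?thesis using j(2) by (simp add: power_mult_distrib)
  qed
  have "energy u K \<le> card K * M" unfolding energy_def M_def by (intro sum_bounded_above) simp
  also have "\<dots> < 2 * card A * M" using card \<open>0 < M\<close> by (simp flip: of_nat_less_iff)
  also have "\<dots> = 8 * (card A * (M / 4))" by simp
  also have "card A * (M / 4) \<le> energy u A"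
    unfolding energy_def using \<open>A \<subseteq> K\<close> \<open>\<And>i. i \<in> K \<Longrightarrow> M / 4 \<le> (u $ i)\<^sup>2\<close>
    by (intro sum_bounded_below) auto
  finally show ?thesis by simp
qed

lemma ls_argmin_exists: "\<exists>y. ls_argmin (Phi :: real^'d^'N) x I y"
proof -
  define Z where "Z = {z :: real^'d. supp z \<subseteq> I}"
  have "subspace Z" unfolding subspace_def Z_def supp_def
    by (auto simp: subset_iff, (metis add.left_neutral)+)
  then have "subspace ((*v) Phi ` Z)" by (rule linear_subspace_image[OF matrix_vector_mul_linear])
  moreover have "(0 :: real^'d) \<in> Z" unfolding Z_def supp_def by simp
  ultimately obtain p
    where p: "p \<in> (*v) Phi ` Z" "\<And>q. q \<in> (*v) Phi ` Z \<Longrightarrow> dist x p \<le> dist x q"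
    using distance_attains_inf[OF closed_subspace, of "(*v) Phi ` Z" x] by blast
  then obtain y where "y \<in> Z" "p = Phi *v y" by auto
  with p(2) have "ls_argmin Phi x I y" unfolding ls_argmin_def Z_def by (auto simp: dist_norm)
  then show ?thesis by blast
qed

text \<open>Normal equations: comparing with \<open>y + t z\<close> for \<open>t = \<langle>\<Phi>z, r\<rangle> / \<parallel>\<Phi>z\<parallel>\<^sup>2\<close> shows that
  the residual is orthogonal to the range of \<open>\<Phi>\<close> on \<open>I\<close>.\<close>
lemma ls_argmin_residual_orthogonal:
  assumes ls: "ls_argmin (Phi :: real^'d^'N) x I y" and z: "supp z \<subseteq> I"
  shows "(Phi *v z) \<bullet> (x - Phi *v y) = 0"
proof (cases "Phi *v z = 0")
  case True
  then show ?thesis by simp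
next
  case False
  define r where "r = x - Phi *v y"
  define g where "g = (Phi *v z) \<bullet> r"
  define q where "q = (norm (Phi *v z))\<^sup>2"
  have "0 < q" unfolding q_def using False by simp
  define t where "t = g / q"
  have "supp (y + t *\<^sub>R z) \<subseteq> I"
    using supp_add[of y "t *\<^sub>R z"] supp_scaleR[of t z] ls z unfolding ls_argmin_def by blast
  moreover have "x - Phi *v (y + t *\<^sub>R z) = r - t *\<^sub>R (Phi *v z)"
    unfolding r_def by (simp add: matrix_vector_right_distrib matrix_vector_mult_scaleR)
  ultimately have "norm r \<le> norm (r - t *\<^sub>R (Phi *v z))"
    using ls unfolding ls_argmin_def r_def by metis
  then have "(norm r)\<^sup>2 \<le> (norm (r - t *\<^sub>R (Phi *v z)))\<^sup>2" by (rule power_mono) simp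
  also have "\<dots> = (norm r)\<^sup>2 - g\<^sup>2 / q"
    using \<open>0 < q\<close> unfolding power2_norm_eq_inner g_def q_def t_def
    by (simp add: inner_diff_left inner_diff_right inner_commute power2_eq_square field_simps)
  finally have "g\<^sup>2 / q \<le> 0" by simp
  then show ?thesis using \<open>0 < q\<close> unfolding g_def r_def by (simp add: divide_le_0_iff)
qed

lemma ls_argmin_correlation_vanishes:
  assumes "ls_argmin (Phi :: real^'d^'N) x I y" "i \<in> I"
  shows "(transpose Phi *v (x - Phi *v y)) $ i = 0"
proof -
  have "supp (axis i (1::real)) \<subseteq> I" using assms(2) unfolding supp_def axis_def by auto
  then have "axis i 1 \<bullet> (transpose Phi *v (x - Phi *v y)) = 0"
    unfolding inner_transpose_mult by (rule ls_argmin_residual_orthogonal[OF assms(1)])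
  then show ?thesis by (simp only: inner_axis' inner_real_def mult_1_left)
qed

lemma romp_step_exists:
  assumes "r \<noteq> 0"
  shows "\<exists>s'. romp_step (Phi :: real^'d^'N) x n (I, r) s'"
proof -
  obtain J where "romp_identify n (transpose Phi *v r) J" using romp_identify_exists by blast
  moreover obtain J0 where "romp_regularize (transpose Phi *v r) J J0"
    using romp_regularize_exists by blast
  moreover obtain y where "ls_argmin Phi x (I \<union> J0) y" using ls_argmin_exists by blast
  ultimately have "romp_step Phi x n (I, r) (I \<union> J0, x - Phi *v y)"
    using assms unfolding romp_step_def Let_def fst_conv snd_conv by blast
  then show ?thesis by blast
qed

section \<open>The correlation vector approximates the missing part of the signal\<close>

text \<open>Orthogonality turns \<open>\<parallel>\<Phi>b\<parallel>\<^sup>2\<close> into \<open>\<langle>\<Phi>b, \<Phi>a\<rangle>\<close>, which the RIC compares with \<open>\<langle>b, a\<rangle> = 0\<close>.\<close>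
lemma RIC_orthogonal_component_small:
  assumes R: "RIC Phi m e" and "supp a \<subseteq> S" "supp b \<subseteq> S" "card S \<le> m"
    and ab: "a \<bullet> b = 0" and orth: "(Phi *v b) \<bullet> (Phi *v a - Phi *v b) = 0"
  shows "norm (Phi *v b) \<le> (2*e + e\<^sup>2) / (1 - e) * norm a"
proof -
  have e: "0 < e" "e < 1" using R unfolding RIC_def by auto
  have "(norm (Phi *v b))\<^sup>2 = (Phi *v b) \<bullet> (Phi *v a)"
    using orth by (simp add: inner_diff_right power2_norm_eq_inner)
  also have "\<dots> \<le> (2*e + e\<^sup>2) * norm b * norm a"
    using RIC_inner_error[OF R assms(3,2,4)] ab by (simp add: inner_commute abs_le_iff)
  also have "\<dots> \<le> (2*e + e\<^sup>2) * (norm (Phi *v b) / (1 - e)) * norm a"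
    using RIC_lower[OF R assms(3,4)] e
    by (intro mult_right_mono mult_left_mono) (auto simp: field_simps)
  finally have "norm (Phi *v b) * norm (Phi *v b)
      \<le> norm (Phi *v b) * ((2*e + e\<^sup>2) / (1 - e) * norm a)"
    using e by (simp add: power2_eq_square field_simps)
  then show ?thesis
    using e by (cases "Phi *v b = 0") (auto intro: mult_left_le_imp_le)
qed

lemma RIC_correlation_restrict_error:
  assumes R: "RIC Phi m e" and T: "supp a \<subseteq> T" and A: "card (A \<union> T) \<le> m"
    and b: "norm (Phi *v b) \<le> (2*e + e\<^sup>2) / (1 - e) * norm a"
  shows "norm (restrict_vec (transpose Phi *v (Phi *v a - Phi *v b) - a) A)
           \<le> 2 * (2*e + e\<^sup>2) / (1 - e) * norm a"
proof -
  have e: "0 < e" "e < 1" using R unfolding RIC_def by auto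
  define z where "z = restrict_vec (transpose Phi *v (Phi *v a - Phi *v b) - a) A"
  have z: "supp z \<subseteq> A \<union> T" "supp z \<subseteq> A" unfolding z_def using supp_restrict_vec by blast+
  have "card A \<le> m" using A card_mono[of "A \<union> T" A] by simp
  have "(norm z)\<^sup>2 = z \<bullet> (transpose Phi *v (Phi *v a - Phi *v b) - a)"
    unfolding z_def norm_restrict_vec_sq inner_restrict_vec ..
  also have "\<dots> = ((Phi *v z) \<bullet> (Phi *v a) - z \<bullet> a) - (Phi *v z) \<bullet> (Phi *v b)"
    by (simp only: inner_diff_right inner_transpose_mult)
  also have "\<dots> \<le> (2*e + e\<^sup>2) * norm z * norm a + norm (Phi *v z) * norm (Phi *v b)"
    using RIC_inner_error[OF R z(1) _ A, of a] T Cauchy_Schwarz_ineq2[of "Phi *v z" "Phi *v b"]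
    by (simp add: abs_le_iff Un_commute le_supI2)
  also have "\<dots> \<le> (2*e + e\<^sup>2) * norm z * norm a
      + ((1 + e) * norm z) * ((2*e + e\<^sup>2) / (1 - e) * norm a)"
    using RIC_upper[OF R z(2) \<open>card A \<le> m\<close>] b e by (intro add_left_mono mult_mono) auto
  also have "\<dots> = norm z * (2 * (2*e + e\<^sup>2) / (1 - e) * norm a)"
    using e by (simp add: field_simps)
  finally have "norm z * norm z \<le> norm z * (2 * (2*e + e\<^sup>2) / (1 - e) * norm a)"
    by (simp add: power2_eq_square)
  then show ?thesis
    unfolding z_def[symmetric] using e by (cases "z = 0") (auto intro: mult_left_le_imp_le)
qed

text \<open>Writing \<open>v - y = v\<^sub>0 - y\<^sub>2\<close>, where \<open>v\<^sub>0\<close> is the part of \<open>v\<close> outside \<open>I\<close> and \<open>y\<^sub>2\<close> is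
  supported on \<open>I\<close>, the normal equations make \<open>\<Phi>y\<^sub>2\<close> orthogonal to the residual.\<close>
lemma romp_correlation_approximates_missing_part:
  assumes R: "RIC Phi (2*n) e" and "card (supp v) \<le> n" and ls: "ls_argmin Phi (Phi *v v) I y"
    and IT: "card (I \<union> supp v) \<le> 2*n" and "card A \<le> n"
  shows "norm (restrict_vec (transpose Phi *v (Phi *v v - Phi *v y) - restrict_vec v (supp v - I)) A)
           \<le> 2 * (2*e + e\<^sup>2) / (1 - e) * norm (restrict_vec v (supp v - I))"
proof -
  define v0 where "v0 = restrict_vec v (supp v - I)"
  define y2 where "y2 = y - restrict_vec v I"
  have v0: "supp v0 \<subseteq> supp v - I" unfolding v0_def by (rule supp_restrict_vec)
  have y2: "supp y2 \<subseteq> I"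
    using ls supp_diff[of y "restrict_vec v I"] supp_restrict_vec[of v I]
    unfolding y2_def ls_argmin_def by blast
  have "v - y = v0 - y2"
    unfolding v0_def y2_def restrict_vec_def supp_def by (auto simp: vec_eq_iff)
  then have res: "Phi *v v - Phi *v y = Phi *v v0 - Phi *v y2"
    by (metis matrix_vector_mult_diff_distrib)
  have "(Phi *v y2) \<bullet> (Phi *v v0 - Phi *v y2) = 0"
    using ls_argmin_residual_orthogonal[OF ls y2] unfolding res .
  moreover have "v0 \<bullet> y2 = 0" using v0 y2 by (intro inner_eq_0_if_disjoint_supp) auto
  ultimately have "norm (Phi *v y2) \<le> (2*e + e\<^sup>2) / (1 - e) * norm v0"
    using v0 y2 IT by (intro RIC_orthogonal_component_small[OF R, of _ "I \<union> supp v"]) auto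
  moreover have "card (A \<union> supp v) \<le> 2 * n" using card_Un_le[of A "supp v"] assms(2,5) by linarith
  ultimately show ?thesis
    unfolding res v0_def[symmetric] using v0
    by (intro RIC_correlation_restrict_error[OF R, of _ "supp v"]) auto
qed

section \<open>Each iteration selects mostly coordinates of the support\<close>

lemma romp_constant_bounds:
  fixes e :: real
  assumes "0 < e" and e2: "e\<^sup>2 * ln (real n) = 9/10000" and "2 \<le> n"
  defines "c \<equiv> 2 * (2*e + e\<^sup>2) / (1 - e)"
  shows "c \<le> 19/100" and "32 * ln (real n) * c\<^sup>2 < (1 - c)\<^sup>2"
proof -
  have "ln 2 \<le> ln (real n)" using assms(3) by (subst ln_le_cancel_iff) auto
  then have "2/3 \<le> ln (real n)" using ln2_ge_two_thirds by linarith
  then have "e\<^sup>2 * (2/3) \<le> 9/10000" using e2 by (metis mult_left_mono zero_le_power2)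
  moreover have "(37/1000)\<^sup>2 < e\<^sup>2" if "37/1000 < e" using that by (intro power_strict_mono) auto
  ultimately have "e \<le> 37/1000" by (force simp: power2_eq_square)
  define q where "q = (2 + e) / (1 - e)"
  have c: "c = 2 * e * q" unfolding c_def q_def by (simp add: power2_eq_square field_simps)
  have "0 \<le> q" "q \<le> 2116/1000"
    unfolding q_def using \<open>e \<le> 37/1000\<close> \<open>0 < e\<close> by (auto simp: field_simps)
  then have "2 * e * q \<le> 2 * (37/1000) * (2116/1000)"
    using \<open>e \<le> 37/1000\<close> \<open>0 < e\<close> by (intro mult_mono) auto
  then show "c \<le> 19/100" unfolding c by simp
  have "32 * ln (real n) * c\<^sup>2 = 128 * (e\<^sup>2 * ln (real n)) * q\<^sup>2"
    unfolding c by (simp add: power_mult_distrib)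
  also have "\<dots> \<le> 128 * (9/10000) * (2116/1000)\<^sup>2"
    unfolding e2 using \<open>0 \<le> q\<close> \<open>q \<le> 2116/1000\<close> by (intro mult_left_mono power_mono) auto
  also have "\<dots> < (1 - 19/100)\<^sup>2" by (simp add: power2_eq_square)
  also have "\<dots> \<le> (1 - c)\<^sup>2" using \<open>c \<le> 19/100\<close> by (intro power_mono) auto
  finally show "32 * ln (real n) * c\<^sup>2 < (1 - c)\<^sup>2" .
qed

text \<open>If more than half of the regularized set \<open>J\<^sub>0\<close> lay outside \<open>supp v\<close>, the energy of \<open>u\<close> on \<open>J\<^sub>0\<close>
  would be both at least \<open>(1 - c)\<^sup>2 V\<^sup>2 / (4 ln n)\<close> (the identified set captures the missing part
  of \<open>v\<close>, of norm \<open>V\<close>, and regularization loses a factor \<open>4 ln n\<close>) and less than \<open>8 c\<^sup>2 V\<^sup>2\<close>.\<close>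
lemma romp_regularized_majority_in_support:
  fixes Phi :: "real^'d^'N" and v y :: "real^'d"
  defines "u \<equiv> transpose Phi *v (Phi *v v - Phi *v y)"
  assumes R: "RIC Phi (2*n) e" and e2: "e\<^sup>2 * ln (real n) = 9/10000" and "2 \<le> n"
    and T: "card (supp v) \<le> n" and ls: "ls_argmin Phi (Phi *v v) I y"
    and IT: "card (I \<union> supp v) \<le> 2*n"
    and J: "romp_identify n u J" and J0: "romp_regularize u J J0"
  shows "card (J0 - supp v) \<le> card (J0 \<inter> supp v)"
proof (rule ccontr)
  assume "\<not> ?thesis"
  then have majority: "card J0 < 2 * card (J0 - supp v)"
    using card_Int_Diff[of J0 "supp v"] by simp
  define v0 where "v0 = restrict_vec v (supp v - I)"
  define c where "c = 2 * (2*e + e\<^sup>2) / (1 - e)"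
  have "0 < e" using R unfolding RIC_def by simp
  have "0 < ln (real n)" using \<open>2 \<le> n\<close> by simp
  have c: "c \<le> 19/100" "32 * ln (real n) * c\<^sup>2 < (1 - c)\<^sup>2"
    using romp_constant_bounds[OF \<open>0 < e\<close> e2 \<open>2 \<le> n\<close>] unfolding c_def by auto
  have approx: "norm (restrict_vec u A - restrict_vec v0 A) \<le> c * norm v0"
    if "card A \<le> n" for A
    using romp_correlation_approximates_missing_part[OF R T ls IT that]
    unfolding u_def[symmetric] v0_def[symmetric] c_def[symmetric] restrict_vec_diff .
  have J0_card: "card J0 \<le> n" using J0 romp_identify_card_le[OF J] card_mono[of J J0]
    unfolding romp_regularize_def by auto
  have "supp v0 \<subseteq> supp v - I" unfolding v0_def by (rule supp_restrict_vec)
  then have "restrict_vec v0 (J0 - supp v) = 0" by (intro restrict_vec_eq_0) blast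
  then have "norm (restrict_vec u (J0 - supp v)) \<le> c * norm v0"
    using approx[of "J0 - supp v"] J0_card card_mono[of J0 "J0 - supp v"] by simp
  then have "(norm (restrict_vec u (J0 - supp v)))\<^sup>2 \<le> (c * norm v0)\<^sup>2"
    by (intro power_mono) auto
  then have energy_outside: "energy u (J0 - supp v) \<le> (c * norm v0)\<^sup>2"
    by (simp only: norm_restrict_vec_sq)
  have "J0 \<subseteq> supp u" "comparable u J0"
    using J0 romp_identify_subset_supp[OF J] unfolding romp_regularize_def by auto
  then have "energy u J0 < 8 * energy u (J0 - supp v)"
    by (intro energy_lt_majority_of_comparable[OF _ _ _ majority]) auto
  obtain K where K: "K \<subseteq> J" "comparable u K" "energy u J \<le> 4 * ln (real n) * energy u K"
    using regularization_energy_fraction[OF romp_identify_card_le[OF J] \<open>2 \<le> n\<close>] by blast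
  have "norm (restrict_vec u (supp v - I) - v0) \<le> c * norm v0"
    using approx[of "supp v - I"] T card_mono[of "supp v" "supp v - I"]
      restrict_vec_idem[OF \<open>supp v0 \<subseteq> supp v - I\<close>] by simp
  then have "(1 - c) * norm v0 \<le> norm (restrict_vec u (supp v - I))"
    using norm_triangle_sub[of v0 "restrict_vec u (supp v - I)"]
    by (simp add: norm_minus_commute algebra_simps)
  then have "((1 - c) * norm v0)\<^sup>2 \<le> (norm (restrict_vec u (supp v - I)))\<^sup>2"
    using c(1) by (intro power_mono) auto
  also have "\<dots> \<le> energy u J"
    unfolding norm_restrict_vec_sq
    using energy_le_romp_identify[OF J] T card_mono[of "supp v" "supp v - I"] by simp
  also have "\<dots> \<le> 4 * ln (real n) * energy u J0"
    using \<open>0 < ln (real n)\<close>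
    by (intro order_trans[OF K(3)] mult_left_mono energy_le_romp_regularize[OF J0 K(1,2)]) auto
  also have "\<dots> < 4 * ln (real n) * (8 * energy u (J0 - supp v))"
    using \<open>energy u J0 < 8 * energy u (J0 - supp v)\<close> \<open>0 < ln (real n)\<close> by simp
  also have "\<dots> \<le> 32 * ln (real n) * c\<^sup>2 * (norm v0)\<^sup>2"
    using energy_outside \<open>0 < ln (real n)\<close> by (simp add: power_mult_distrib)
  also have "\<dots> \<le> (1 - c)\<^sup>2 * (norm v0)\<^sup>2" using c(2) by (intro mult_right_mono) auto
  finally show False by (simp add: power_mult_distrib)
qed

section \<open>The iteration invariant\<close>

text \<open>The last conjunct counts iterations: each one adds a new element of \<open>supp v\<close> to \<open>I\<close>.\<close>
definition romp_invariant :: "real^'d^'N \<Rightarrow> real^'d \<Rightarrow> nat \<Rightarrow> 'd set \<Rightarrow> real^'N \<Rightarrow> bool" where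
  "romp_invariant Phi v k I r \<longleftrightarrow>
     (\<exists>y. ls_argmin Phi (Phi *v v) I y \<and> r = Phi *v v - Phi *v y) \<and>
     card (I - supp v) \<le> card (I \<inter> supp v) \<and> k \<le> card (I \<inter> supp v)"

lemma romp_invariant_init: "romp_invariant Phi v 0 {} (Phi *v v)"
proof -
  have "supp z \<subseteq> {} \<longleftrightarrow> z = 0" for z :: "real^'d"
    unfolding supp_def by (auto simp: vec_eq_iff)
  then have "ls_argmin Phi (Phi *v v) {} 0" unfolding ls_argmin_def by auto
  then show ?thesis unfolding romp_invariant_def by force
qed

lemma card_union_le_if_minority:
  fixes I T :: "'a :: finite set"
  assumes "card (I - T) \<le> card (I \<inter> T)" "card T \<le> n"
  shows "card (I \<union> T) \<le> 2 * n" and "card I \<le> 2 * n"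
proof -
  have "card (I \<inter> T) \<le> card T" by (intro card_mono) auto
  moreover have "card (I \<union> T) = card (I - T) + card T"
    using card_Un_disjoint[of "I - T" T] by (simp add: Int_commute)
  moreover have "card I = card (I \<inter> T) + card (I - T)" by (rule card_Int_Diff) simp
  ultimately show "card (I \<union> T) \<le> 2 * n" "card I \<le> 2 * n" using assms by linarith+
qed

lemma romp_invariant_step:
  assumes R: "RIC Phi (2*n) e" and e2: "e\<^sup>2 * ln (real n) = 9/10000" and "2 \<le> n"
    and T: "card (supp v) \<le> n" and inv: "romp_invariant Phi v k I r"
    and step: "romp_step Phi (Phi *v v) n (I, r) (I', r')"
  shows "romp_invariant Phi v (Suc k) I' r'"
proof -
  obtain y where ls: "ls_argmin Phi (Phi *v v) I y" and r: "r = Phi *v v - Phi *v y"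
    and minority: "card (I - supp v) \<le> card (I \<inter> supp v)" and k: "k \<le> card (I \<inter> supp v)"
    using inv unfolding romp_invariant_def by blast
  define u where "u = transpose Phi *v r"
  obtain J J0 y' where "r \<noteq> 0" and J: "romp_identify n u J" and J0: "romp_regularize u J J0"
    and ls': "ls_argmin Phi (Phi *v v) (I \<union> J0) y'"
    and I': "I' = I \<union> J0" "r' = Phi *v v - Phi *v y'"
    using step unfolding romp_step_def Let_def u_def fst_conv snd_conv by blast
  have "r \<bullet> r = (v - y) \<bullet> u"
    unfolding u_def inner_transpose_mult r by (simp add: matrix_vector_mult_diff_distrib)
  then have "u \<noteq> 0" using \<open>r \<noteq> 0\<close> by auto
  then have "J \<noteq> {}" using romp_identify_nonempty[OF J] \<open>2 \<le> n\<close> by simp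
  then have "J0 \<noteq> {}" using romp_regularize_nonempty[OF J0 romp_identify_subset_supp[OF J]] by simp
  have "u $ i = 0" if "i \<in> I" for i
    using ls_argmin_correlation_vanishes[OF ls that] unfolding u_def r .
  moreover have "J0 \<subseteq> supp u"
    using J0 romp_identify_subset_supp[OF J] unfolding romp_regularize_def by blast
  ultimately have "J0 \<inter> I = {}" unfolding supp_def by blast
  have J0_majority: "card (J0 - supp v) \<le> card (J0 \<inter> supp v)"
  proof (rule romp_regularized_majority_in_support[OF R e2 \<open>2 \<le> n\<close> T ls])
    show "card (I \<union> supp v) \<le> 2 * n" by (rule card_union_le_if_minority(1)[OF minority T])
    show "romp_identify n (transpose Phi *v (Phi *v v - Phi *v y)) J" using J unfolding u_def r .
    show "romp_regularize (transpose Phi *v (Phi *v v - Phi *v y)) J J0" using J0 unfolding u_def r .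
  qed
  have "0 < card (J0 \<inter> supp v)"
  proof (rule ccontr)
    assume "\<not> 0 < card (J0 \<inter> supp v)"
    then have "J0 - supp v = {}" "J0 \<inter> supp v = {}" using J0_majority by auto
    then show False using \<open>J0 \<noteq> {}\<close> by blast
  qed
  moreover have "card (I' - supp v) = card (I - supp v) + card (J0 - supp v)"
    unfolding I' Un_Diff using \<open>J0 \<inter> I = {}\<close> by (intro card_Un_disjoint) auto
  moreover have "card (I' \<inter> supp v) = card (I \<inter> supp v) + card (J0 \<inter> supp v)"
    unfolding I' Int_Un_distrib2 using \<open>J0 \<inter> I = {}\<close> by (intro card_Un_disjoint) auto
  ultimately show ?thesis
    using ls' I' minority k J0_majority unfolding romp_invariant_def by auto
qed

lemma romp_invariant_relpowp:
  assumes R: "RIC Phi (2*n) e" and e2: "e\<^sup>2 * ln (real n) = 9/10000" and "2 \<le> n"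
    and T: "card (supp v) \<le> n"
  shows "(romp_step Phi (Phi *v v) n ^^ k) ({}, Phi *v v) (I, r) \<Longrightarrow> romp_invariant Phi v k I r"
proof (induction k arbitrary: I r)
  case 0
  then show ?case using romp_invariant_init[of Phi v] by auto
next
  case (Suc k)
  then obtain I0 r0 where "(romp_step Phi (Phi *v v) n ^^ k) ({}, Phi *v v) (I0, r0)"
    and "romp_step Phi (Phi *v v) n (I0, r0) (I, r)"
    by (metis relpowp_Suc_E surj_pair)
  with Suc.IH show ?case by (intro romp_invariant_step[OF R e2 \<open>2 \<le> n\<close> T]) auto
qed

lemma romp_invariant_card_bounds:
  assumes "romp_invariant Phi v k I r" "card (supp v) \<le> n"
  shows "k \<le> n" and "card I \<le> 2 * n"
proof -
  have "card (I - supp v) \<le> card (I \<inter> supp v)" "k \<le> card (I \<inter> supp v)"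
    using assms(1) unfolding romp_invariant_def by auto
  moreover have "card (I \<inter> supp v) \<le> card (supp v)" by (intro card_mono) auto
  ultimately show "k \<le> n" "card I \<le> 2 * n"
    using assms(2) card_union_le_if_minority(2) by (force, blast)
qed

lemma romp_invariant_recovers_support:
  assumes R: "RIC Phi (2*n) e" and "card (supp v) \<le> n" and "romp_invariant Phi v k I 0"
  shows "supp v \<subseteq> I"
proof -
  obtain y where ls: "ls_argmin Phi (Phi *v v) I y" and "Phi *v (v - y) = 0"
    and "card (I - supp v) \<le> card (I \<inter> supp v)"
    using assms(3) unfolding romp_invariant_def by (auto simp: matrix_vector_mult_diff_distrib)
  then have "card (I \<union> supp v) \<le> 2 * n" using card_union_le_if_minority(1) assms(2) by blast
  moreover have "supp y \<subseteq> I" using ls unfolding ls_argmin_def by simp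
  then have "supp (v - y) \<subseteq> I \<union> supp v" using supp_diff[of v y] by blast
  ultimately have "(1 - e) * norm (v - y) \<le> norm (Phi *v (v - y))" by (intro RIC_lower[OF R])
  then have "(1 - e) * norm (v - y) \<le> 0" using \<open>Phi *v (v - y) = 0\<close> by simp
  moreover have "e < 1" using R unfolding RIC_def by simp
  ultimately have "v = y" by (simp add: mult_le_0_iff)
  then show ?thesis using \<open>supp y \<subseteq> I\<close> by simp
qed

theorem theorem1p3:
  fixes Phi :: "real^'d^'N" and v :: "real^'d" and n :: nat
  assumes "n \<ge> 1"
    and "RIC Phi (2 * n) (0.03 / sqrt (ln (real n)))"
    and "sparse n v"
  shows "\<forall>k I r. (romp_step Phi (Phi *v v) n ^^ k) ({}, Phi *v v) (I, r) \<longrightarrow>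
           k \<le> n \<and>
           (r \<noteq> 0 \<longrightarrow> (\<exists>s'. romp_step Phi (Phi *v v) n (I, r) s')) \<and>
           (r = 0 \<longrightarrow> supp v \<subseteq> I \<and> card I \<le> 2 * n)"
proof (intro allI impI)
  fix k I r
  assume run: "(romp_step Phi (Phi *v v) n ^^ k) ({}, Phi *v v) (I, r)"
  define e where "e = 0.03 / sqrt (ln (real n))"
  have R: "RIC Phi (2 * n) e" using assms(2) unfolding e_def .
  \<comment> \<open>For \<open>n = 1\<close> the constant is \<open>0.03 / 0 = 0\<close>, which the RIC excludes.\<close>
  then have "0 < ln (real n)" unfolding RIC_def e_def using assms(1) by (cases "n = 1") auto
  then have "2 \<le> n" using assms(1) by (cases "n = 1") auto
  have e2: "e\<^sup>2 * ln (real n) = 9/10000"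
    unfolding e_def using \<open>0 < ln (real n)\<close> by (simp add: power_divide)
  have T: "card (supp v) \<le> n" using assms(3) unfolding sparse_def .
  have inv: "romp_invariant Phi v k I r" by (rule romp_invariant_relpowp[OF R e2 \<open>2 \<le> n\<close> T run])
  show "k \<le> n \<and> (r \<noteq> 0 \<longrightarrow> (\<exists>s'. romp_step Phi (Phi *v v) n (I, r) s')) \<and>
        (r = 0 \<longrightarrow> supp v \<subseteq> I \<and> card I \<le> 2 * n)"
    using romp_invariant_card_bounds[OF inv T] romp_step_exists romp_invariant_recovers_support[OF R T] inv
    by blast
qed

end
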